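(* Let $\Gamma=A\ast B$ with $A,B$ non-trivial, let $\varepsilon>0$ and let $(G,d)$ be a group with a bi-invariant metric without $\varepsilon$-small subgroups. Let $\mu_A:A\to G$, $\mu_B:B\to G$ be bounded alternating maps with $\delta:=\max\{\|\mu_A\|_\infty,\|\mu_B\|_\infty\}\leq\varepsilon/2$. Then the split quasi-representation $\mu=\mu_A\ast\mu_B:\Gamma\to G$ satisfies $D(\mu)\geq\delta$.
   Context: $G$ has no $\varepsilon$-small subgroups if the open $\varepsilon$-ball around the identity $e$ contains no non-trivial subgroup. For maps $f_1,f_2:X\to G$, $d(f_1,f_2)=\sup_x d(f_1(x),f_2(x))$, and $\|f\|_\infty=d(f,e)$ (distance to the constant map $e$); $f$ is bounded if this is finite. Alternating means $\mu(x^{-1})=\mu(x)^{-1}$. Each $1\neq g\in A\ast B$ has a unique normal form $g=a_1b_1\cdots a_nb_n$ ($a_i\in A$, $b_i\in B$, all non-trivial except possibly $a_1$ or $b_n$), and $(\mu_A\ast\mu_B)(1)=e$, $(\mu_A\ast\mu_B)(a_1b_1\cdots a_nb_n)=\mu_A(a_1)\mu_B(b_1)\cdots\mu_A(a_n)\mu_B(b_n)$. $D(\mu)=\inf\{d(\mu,\rho):\rho\in\mathrm{Hom}(\Gamma,G)\}$. *)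

theory Defs
  imports "HOL-Algebra.Group" "HOL-Library.Extended_Real"
begin

definition nontriv_letter :: "'a monoid \<Rightarrow> 'b monoid \<Rightarrow> ('a + 'b) \<Rightarrow> bool" where
  "nontriv_letter A B x = (case x of
      Inl a \<Rightarrow> a \<in> carrier A \<and> a \<noteq> \<one>\<^bsub>A\<^esub>
    | Inr b \<Rightarrow> b \<in> carrier B \<and> b \<noteq> \<one>\<^bsub>B\<^esub>)"

fun same_side :: "('a + 'b) \<Rightarrow> ('a + 'b) \<Rightarrow> bool" where
  "same_side (Inl _) (Inl _) = True"
| "same_side (Inr _) (Inr _) = True"
| "same_side _ _ = False"

fun alternating_word :: "('a + 'b) list \<Rightarrow> bool" where
  "alternating_word (x # y # w) = (\<not> same_side x y \<and> alternating_word (y # w))"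
| "alternating_word _ = True"

definition reduced_word :: "'a monoid \<Rightarrow> 'b monoid \<Rightarrow> ('a + 'b) list \<Rightarrow> bool" where
  "reduced_word A B w = ((\<forall>x\<in>set w. nontriv_letter A B x) \<and> alternating_word w)"

fun cons_red :: "'a monoid \<Rightarrow> 'b monoid \<Rightarrow> ('a + 'b) \<Rightarrow> ('a + 'b) list \<Rightarrow> ('a + 'b) list" where
  "cons_red A B (Inl a) w =
     (if a = \<one>\<^bsub>A\<^esub> then w else
      (case w of
         Inl a' # w' \<Rightarrow> (if a \<otimes>\<^bsub>A\<^esub> a' = \<one>\<^bsub>A\<^esub> then w' else Inl (a \<otimes>\<^bsub>A\<^esub> a') # w')
       | _ \<Rightarrow> Inl a # w))"
| "cons_red A B (Inr b) w =
     (if b = \<one>\<^bsub>B\<^esub> then w else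
      (case w of
         Inr b' # w' \<Rightarrow> (if b \<otimes>\<^bsub>B\<^esub> b' = \<one>\<^bsub>B\<^esub> then w' else Inr (b \<otimes>\<^bsub>B\<^esub> b') # w')
       | _ \<Rightarrow> Inr b # w))"

definition free_product :: "'a monoid \<Rightarrow> 'b monoid \<Rightarrow> ('a + 'b) list monoid" where
  "free_product A B = \<lparr> carrier = {w. reduced_word A B w},
                        mult = (\<lambda>u v. foldr (cons_red A B) u v),
                        one = [] \<rparr>"

definition split_map ::
  "('g, 'c) monoid_scheme \<Rightarrow> ('a \<Rightarrow> 'g) \<Rightarrow> ('b \<Rightarrow> 'g) \<Rightarrow> ('a + 'b) list \<Rightarrow> 'g" where
  "split_map G muA muB w =
     foldr (\<lambda>x g. (case x of Inl a \<Rightarrow> muA a | Inr b \<Rightarrow> muB b) \<otimes>\<^bsub>G\<^esub> g) w \<one>\<^bsub>G\<^esub>"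

definition metric_on :: "'g set \<Rightarrow> ('g \<Rightarrow> 'g \<Rightarrow> real) \<Rightarrow> bool" where
  "metric_on S d = ((\<forall>x\<in>S. \<forall>y\<in>S. 0 \<le> d x y \<and> (d x y = 0 \<longleftrightarrow> x = y) \<and> d x y = d y x)
     \<and> (\<forall>x\<in>S. \<forall>y\<in>S. \<forall>z\<in>S. d x z \<le> d x y + d y z))"

definition bi_invariant_metric :: "('g, 'c) monoid_scheme \<Rightarrow> ('g \<Rightarrow> 'g \<Rightarrow> real) \<Rightarrow> bool" where
  "bi_invariant_metric G d = (metric_on (carrier G) d \<and>
     (\<forall>g\<in>carrier G. \<forall>x\<in>carrier G. \<forall>y\<in>carrier G.
        d (g \<otimes>\<^bsub>G\<^esub> x) (g \<otimes>\<^bsub>G\<^esub> y) = d x y \<and> d (x \<otimes>\<^bsub>G\<^esub> g) (y \<otimes>\<^bsub>G\<^esub> g) = d x y))"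

definition no_small_subgroups :: "('g, 'c) monoid_scheme \<Rightarrow> ('g \<Rightarrow> 'g \<Rightarrow> real) \<Rightarrow> real \<Rightarrow> bool" where
  "no_small_subgroups G d \<epsilon> = (\<forall>H. subgroup H G \<and> H \<subseteq> {g \<in> carrier G. d g \<one>\<^bsub>G\<^esub> < \<epsilon>}
        \<longrightarrow> H = {\<one>\<^bsub>G\<^esub>})"

text \<open>Uniform distance of two maps on a set (possibly infinite, hence ereal).\<close>
definition sup_dist :: "('g \<Rightarrow> 'g \<Rightarrow> real) \<Rightarrow> 'x set \<Rightarrow> ('x \<Rightarrow> 'g) \<Rightarrow> ('x \<Rightarrow> 'g) \<Rightarrow> ereal" where
  "sup_dist d X f1 f2 = (SUP x\<in>X. ereal (d (f1 x) (f2 x)))"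

definition sup_norm :: "('g, 'c) monoid_scheme \<Rightarrow> ('g \<Rightarrow> 'g \<Rightarrow> real) \<Rightarrow> 'x set \<Rightarrow> ('x \<Rightarrow> 'g) \<Rightarrow> ereal" where
  "sup_norm G d X f = sup_dist d X f (\<lambda>_. \<one>\<^bsub>G\<^esub>)"

definition alternating_map :: "('x, 'c) monoid_scheme \<Rightarrow> ('g, 'e) monoid_scheme \<Rightarrow> ('x \<Rightarrow> 'g) \<Rightarrow> bool" where
  "alternating_map X G f = (\<forall>x\<in>carrier X. f (inv\<^bsub>X\<^esub> x) = inv\<^bsub>G\<^esub> (f x))"

definition hom_dist :: "('x, 'c) monoid_scheme \<Rightarrow> ('g, 'e) monoid_scheme \<Rightarrow> ('g \<Rightarrow> 'g \<Rightarrow> real)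
    \<Rightarrow> ('x \<Rightarrow> 'g) \<Rightarrow> ereal" where
  "hom_dist \<Gamma> G d \<mu> = (INF \<rho>\<in>hom \<Gamma> G. sup_dist d (carrier \<Gamma>) \<mu> \<rho>)"

end

theory Submission
  imports Defs
begin

text \<open>Suppose a homomorphism \<open>\<rho>\<close> were closer than \<open>\<delta> \<le> \<epsilon>/2\<close> to \<open>\<mu>\<close>. On the copy of \<open>A\<close> in
  \<open>\<Gamma>\<close>, \<open>\<mu>\<close> is \<open>\<mu>\<^sub>A\<close>, which stays within \<open>\<epsilon>/2\<close> of \<open>e\<close>, so by the triangle inequality
  \<open>\<rho>(A)\<close> is a subgroup inside the open \<open>\<epsilon>\<close>-ball, hence trivial. Thus \<open>d(\<mu>,\<rho>) \<ge> \<parallel>\<mu>\<^sub>A\<parallel>\<^sub>\<infinity>\<close>,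
  and likewise \<open>d(\<mu>,\<rho>) \<ge> \<parallel>\<mu>\<^sub>B\<parallel>\<^sub>\<infinity>\<close>, a contradiction.\<close>

lemma metric_on_zero: "\<lbrakk>metric_on S d; x \<in> S\<rbrakk> \<Longrightarrow> d x x = 0"
  unfolding metric_on_def by blast

lemma metric_on_nonneg: "\<lbrakk>metric_on S d; x \<in> S; y \<in> S\<rbrakk> \<Longrightarrow> 0 \<le> d x y"
  unfolding metric_on_def by blast

lemma metric_on_sym: "\<lbrakk>metric_on S d; x \<in> S; y \<in> S\<rbrakk> \<Longrightarrow> d x y = d y x"
  unfolding metric_on_def by blast

lemma metric_on_triangle:
  "\<lbrakk>metric_on S d; x \<in> S; y \<in> S; z \<in> S\<rbrakk> \<Longrightarrow> d x z \<le> d x y + d y z"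
  unfolding metric_on_def by blast

lemma no_small_subgroupsD:
  assumes "no_small_subgroups G d \<epsilon>" "subgroup H G" "\<And>g. g \<in> H \<Longrightarrow> d g \<one>\<^bsub>G\<^esub> < \<epsilon>"
  shows "H = {\<one>\<^bsub>G\<^esub>}"
proof -
  have "H \<subseteq> {g \<in> carrier G. d g \<one>\<^bsub>G\<^esub> < \<epsilon>}"
    using assms(3) subgroup.mem_carrier[OF assms(2)] by auto
  with assms(1,2) show ?thesis unfolding no_small_subgroups_def by simp
qed

lemma sup_dist_upper:
  "x \<in> X \<Longrightarrow> ereal (d (f1 x) (f2 x)) \<le> sup_dist d X f1 f2"
  unfolding sup_dist_def by (rule SUP_upper)

lemma sup_norm_upper:
  "x \<in> X \<Longrightarrow> ereal (d (f x) \<one>\<^bsub>G\<^esub>) \<le> sup_norm G d X f"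
  unfolding sup_norm_def by (rule sup_dist_upper)

lemma hom_trivial_if_small_image:
  assumes "group X" "group G" "h \<in> hom X G" "no_small_subgroups G d \<epsilon>"
    and "\<And>x. x \<in> carrier X \<Longrightarrow> d (h x) \<one>\<^bsub>G\<^esub> < \<epsilon>" and "x \<in> carrier X"
  shows "h x = \<one>\<^bsub>G\<^esub>"
proof -
  interpret group_hom X G h
    using assms by (simp add: group_hom_def group_hom_axioms_def)
  have "h ` carrier X = {\<one>\<^bsub>G\<^esub>}"
    using no_small_subgroupsD[OF assms(4) img_is_subgroup] assms(5) by blast
  with assms(6) show ?thesis by auto
qed

text \<open>\<open>f(e)\<close> is an involution, so \<open>{e, f(e)}\<close> is a subgroup inside the \<open>\<epsilon>\<close>-ball.\<close>
lemma alternating_map_one: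
  assumes "group X" "group G" "f \<in> carrier X \<rightarrow> carrier G" "alternating_map X G f"
    and "metric_on (carrier G) d" "no_small_subgroups G d \<epsilon>"
    and "sup_norm G d (carrier X) f < ereal \<epsilon>"
  shows "f \<one>\<^bsub>X\<^esub> = \<one>\<^bsub>G\<^esub>"
proof -
  interpret X: group X by fact
  interpret G: group G by fact
  define t where "t = f \<one>\<^bsub>X\<^esub>"
  have t: "t \<in> carrier G" using assms(3) unfolding t_def by auto
  have inv_t: "inv\<^bsub>G\<^esub> t = t"
    using assms(4) unfolding alternating_map_def t_def by (metis X.inv_one X.one_closed)
  have sg: "subgroup {\<one>\<^bsub>G\<^esub>, t} G"
    by (rule subgroup.intro) (use t inv_t G.r_inv[OF t] in auto)
  have t_small: "d t \<one>\<^bsub>G\<^esub> < \<epsilon>"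
    using le_less_trans[OF sup_norm_upper[of "\<one>\<^bsub>X\<^esub>" "carrier X" d f G] assms(7)]
    unfolding t_def by simp
  have "d \<one>\<^bsub>G\<^esub> \<one>\<^bsub>G\<^esub> < \<epsilon>"
    using metric_on_nonneg[OF assms(5) t G.one_closed] t_small
      metric_on_zero[OF assms(5) G.one_closed] by linarith
  with t_small have "{\<one>\<^bsub>G\<^esub>, t} = {\<one>\<^bsub>G\<^esub>}"
    by (intro no_small_subgroupsD[OF assms(6) sg]) auto
  thus ?thesis unfolding t_def by auto
qed

definition free_inl :: "'a monoid \<Rightarrow> 'b monoid \<Rightarrow> 'a \<Rightarrow> ('a + 'b) list" where
  "free_inl A B a = cons_red A B (Inl a) []"

definition free_inr :: "'a monoid \<Rightarrow> 'b monoid \<Rightarrow> 'b \<Rightarrow> ('a + 'b) list" where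
  "free_inr A B b = cons_red A B (Inr b) []"

lemma free_inl_hom:
  assumes "group A"
  shows "free_inl A B \<in> hom A (free_product A B)"
proof -
  interpret group A by fact
  show ?thesis
  proof (rule homI)
    fix x assume "x \<in> carrier A"
    then show "free_inl A B x \<in> carrier (free_product A B)"
      by (simp add: free_inl_def free_product_def reduced_word_def nontriv_letter_def)
  next
    fix x y assume "x \<in> carrier A" "y \<in> carrier A"
    then show "free_inl A B (x \<otimes>\<^bsub>A\<^esub> y) = free_inl A B x \<otimes>\<^bsub>free_product A B\<^esub> free_inl A B y"
      by (auto simp: free_inl_def free_product_def)
  qed
qed

lemma free_inr_hom:
  assumes "group B"
  shows "free_inr A B \<in> hom B (free_product A B)"
proof -
  interpret group B by fact
  show ?thesis
  proof (rule homI)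
    fix x assume "x \<in> carrier B"
    then show "free_inr A B x \<in> carrier (free_product A B)"
      by (simp add: free_inr_def free_product_def reduced_word_def nontriv_letter_def)
  next
    fix x y assume "x \<in> carrier B" "y \<in> carrier B"
    then show "free_inr A B (x \<otimes>\<^bsub>B\<^esub> y) = free_inr A B x \<otimes>\<^bsub>free_product A B\<^esub> free_inr A B y"
      by (auto simp: free_inr_def free_product_def)
  qed
qed

lemma split_map_free_inl:
  "\<lbrakk>group G; muA \<in> carrier A \<rightarrow> carrier G; muA \<one>\<^bsub>A\<^esub> = \<one>\<^bsub>G\<^esub>; a \<in> carrier A\<rbrakk>
   \<Longrightarrow> split_map G muA muB (free_inl A B a) = muA a"
  by (auto simp: free_inl_def split_map_def group.is_monoid monoid.r_one Pi_iff)

lemma split_map_free_inr: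
  "\<lbrakk>group G; muB \<in> carrier B \<rightarrow> carrier G; muB \<one>\<^bsub>B\<^esub> = \<one>\<^bsub>G\<^esub>; b \<in> carrier B\<rbrakk>
   \<Longrightarrow> split_map G muA muB (free_inr A B b) = muB b"
  by (auto simp: free_inr_def split_map_def group.is_monoid monoid.r_one Pi_iff)

text \<open>By the triangle inequality \<open>\<rho> \<circ> \<iota>\<close> maps into the open \<open>\<epsilon>\<close>-ball, so it is trivial and
  \<open>d(\<mu>,\<rho>)\<close> dominates \<open>d(f, e)\<close> pointwise.\<close>
lemma sup_norm_le_sup_dist_hom:
  assumes "group X" "group G" "metric_on (carrier G) d" "no_small_subgroups G d \<epsilon>"
    and \<iota>: "\<iota> \<in> hom X \<Gamma>" and \<rho>: "\<rho> \<in> hom \<Gamma> G"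
    and f: "f \<in> carrier X \<rightarrow> carrier G" and restr: "\<And>x. x \<in> carrier X \<Longrightarrow> \<mu> (\<iota> x) = f x"
    and f_small: "sup_norm G d (carrier X) f \<le> ereal (\<epsilon> / 2)"
    and close: "sup_dist d (carrier \<Gamma>) \<mu> \<rho> < ereal (\<epsilon> / 2)"
  shows "sup_norm G d (carrier X) f \<le> sup_dist d (carrier \<Gamma>) \<mu> \<rho>"
proof -
  interpret G: group G by fact
  have \<iota>_closed: "\<iota> x \<in> carrier \<Gamma>" if "x \<in> carrier X" for x
    using \<iota> that by (auto simp: hom_def)
  have \<rho>\<iota>_closed: "\<rho> (\<iota> x) \<in> carrier G" if "x \<in> carrier X" for x
    using \<rho> \<iota>_closed[OF that] by (auto simp: hom_def)
  have dist_close: "d (f x) (\<rho> (\<iota> x)) \<le> sup_dist d (carrier \<Gamma>) \<mu> \<rho>" if "x \<in> carrier X" for x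
    using sup_dist_upper[OF \<iota>_closed[OF that], of d \<mu> \<rho>] restr[OF that] by simp
  have hom: "\<rho> \<circ> \<iota> \<in> hom X G"
    using \<iota> \<rho> \<iota>_closed by (auto intro!: homI simp: hom_def)
  have small: "d ((\<rho> \<circ> \<iota>) x) \<one>\<^bsub>G\<^esub> < \<epsilon>" if x: "x \<in> carrier X" for x
  proof -
    have fx: "f x \<in> carrier G" using f x by blast
    have "d (\<rho> (\<iota> x)) \<one>\<^bsub>G\<^esub> \<le> d (\<rho> (\<iota> x)) (f x) + d (f x) \<one>\<^bsub>G\<^esub>"
      by (rule metric_on_triangle[OF assms(3) \<rho>\<iota>_closed[OF x] fx G.one_closed])
    moreover have "d (\<rho> (\<iota> x)) (f x) = d (f x) (\<rho> (\<iota> x))"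
      by (rule metric_on_sym[OF assms(3) \<rho>\<iota>_closed[OF x] fx])
    moreover have "ereal (d (f x) (\<rho> (\<iota> x))) < ereal (\<epsilon> / 2)"
      using dist_close[OF x] close by (rule le_less_trans)
    moreover have "ereal (d (f x) \<one>\<^bsub>G\<^esub>) \<le> ereal (\<epsilon> / 2)"
      using sup_norm_upper[OF x, of d f G] f_small by (rule order.trans)
    ultimately show ?thesis by simp
  qed
  have trivial: "\<rho> (\<iota> x) = \<one>\<^bsub>G\<^esub>" if "x \<in> carrier X" for x
    using hom_trivial_if_small_image[OF assms(1,2) hom assms(4) small that] by simp
  show ?thesis
    unfolding sup_norm_def sup_dist_def[of d "carrier X"]
  proof (rule SUP_least)
    fix x assume "x \<in> carrier X"
    with dist_close trivial show "ereal (d (f x) \<one>\<^bsub>G\<^esub>) \<le> sup_dist d (carrier \<Gamma>) \<mu> \<rho>"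
      by simp
  qed
qed

theorem theorem4p2:
  fixes A :: "'a monoid" and B :: "'b monoid" and G :: "'g monoid"
    and d :: "'g \<Rightarrow> 'g \<Rightarrow> real" and \<epsilon> :: real
    and muA :: "'a \<Rightarrow> 'g" and muB :: "'b \<Rightarrow> 'g"
  assumes "group A" and "group B"
    and "carrier A \<noteq> {\<one>\<^bsub>A\<^esub>}" and "carrier B \<noteq> {\<one>\<^bsub>B\<^esub>}"
    and "\<epsilon> > 0"
    and "group G" and "bi_invariant_metric G d" and "no_small_subgroups G d \<epsilon>"
    and "muA \<in> carrier A \<rightarrow> carrier G" and "muB \<in> carrier B \<rightarrow> carrier G"
    and "alternating_map A G muA" and "alternating_map B G muB"
    and "sup_norm G d (carrier A) muA < \<infinity>" and "sup_norm G d (carrier B) muB < \<infinity>"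
    and "max (sup_norm G d (carrier A) muA) (sup_norm G d (carrier B) muB) \<le> ereal (\<epsilon> / 2)"
  shows "hom_dist (free_product A B) G d (split_map G muA muB)
           \<ge> max (sup_norm G d (carrier A) muA) (sup_norm G d (carrier B) muB)"
  unfolding hom_dist_def
proof (rule INF_greatest, rule ccontr)
  fix \<rho> assume \<rho>: "\<rho> \<in> hom (free_product A B) G"
  let ?S = "sup_dist d (carrier (free_product A B)) (split_map G muA muB) \<rho>"
  assume "\<not> max (sup_norm G d (carrier A) muA) (sup_norm G d (carrier B) muB) \<le> ?S"
  with assms(15) have close: "?S < ereal (\<epsilon> / 2)"
    and A_small: "sup_norm G d (carrier A) muA \<le> ereal (\<epsilon> / 2)"
    and B_small: "sup_norm G d (carrier B) muB \<le> ereal (\<epsilon> / 2)" by auto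
  have metric: "metric_on (carrier G) d"
    using assms(7) unfolding bi_invariant_metric_def by blast
  have half_lt: "ereal (\<epsilon> / 2) < ereal \<epsilon>" using assms(5) by simp
  have "muA \<one>\<^bsub>A\<^esub> = \<one>\<^bsub>G\<^esub>"
    using alternating_map_one[OF assms(1,6,9,11) metric assms(8)] A_small half_lt by (meson le_less_trans)
  then have "sup_norm G d (carrier A) muA \<le> ?S"
    by (intro sup_norm_le_sup_dist_hom[OF assms(1,6) metric assms(8) free_inl_hom[OF assms(1)]
          \<rho> assms(9) _ A_small close] split_map_free_inl[OF assms(6,9)])
  moreover have "muB \<one>\<^bsub>B\<^esub> = \<one>\<^bsub>G\<^esub>"
    using alternating_map_one[OF assms(2,6,10,12) metric assms(8)] B_small half_lt by (meson le_less_trans)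
  then have "sup_norm G d (carrier B) muB \<le> ?S"
    by (intro sup_norm_le_sup_dist_hom[OF assms(2,6) metric assms(8) free_inr_hom[OF assms(2)]
          \<rho> assms(10) _ B_small close] split_map_free_inr[OF assms(6,10)])
  ultimately show False
    using \<open>\<not> max _ _ \<le> ?S\<close> by simp
qed

end
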